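(* For every integer $n\ge 2$, $$\mathrm{spt}1_{do}(n)=2p_{de}(n-1)+p_{do}(n-1)\qquad\text{and}\qquad \mathrm{spt}1'_{do}(n)=-p'_{do}(n-1).$$
   Context: For a partition $\pi$, $s(\pi)$ is its smallest part. $\mathrm{Spt}1_{do}(n)$ is the set of partitions $\pi$ of $n$ in which $s(\pi)$ occurs exactly once and the remaining parts are pairwise distinct and each has parity different from that of $s(\pi)$. $B_0(1,n)$ (resp. $B_1(1,n)$) is the number of $\pi\in\mathrm{Spt}1_{do}(n)$ whose number of parts greater than $s(\pi)$ is even (resp. odd); $\mathrm{spt}1_{do}(n)=B_0(1,n)+B_1(1,n)$ and $\mathrm{spt}1'_{do}(n)=B_0(1,n)-B_1(1,n)$. $p_{de}(n)$ (resp. $p_{do}(n)$) is the number of partitions of $n$ into distinct even (resp. distinct odd) parts; $p'_{do}(n)$ is the number of partitions of $n$ into distinct odd parts with an even number of parts minus the number with an odd number of parts; all equal $1$ at $n=0$. *)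

theory Defs
  imports Main "HOL-Library.Multiset"
begin

definition partitions :: "nat \<Rightarrow> nat multiset set" where
  "partitions n = {p. (\<forall>x\<in>#p. 0 < x) \<and> sum_mset p = n}"

definition spart :: "nat multiset \<Rightarrow> nat" where
  "spart p = Min (set_mset p)"

definition Spt1_do :: "nat \<Rightarrow> nat multiset set" where
  "Spt1_do n = {p \<in> partitions n. p \<noteq> {#} \<and> count p (spart p) = 1 \<and>
     (\<forall>x \<in># p - {#spart p#}. count (p - {#spart p#}) x = 1 \<and> odd x \<noteq> odd (spart p))}"

definition num_larger :: "nat multiset \<Rightarrow> nat" where
  "num_larger p = size (filter_mset (\<lambda>x. spart p < x) p)"

definition B0 :: "nat \<Rightarrow> nat" where
  "B0 n = card {p \<in> Spt1_do n. even (num_larger p)}"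

definition B1 :: "nat \<Rightarrow> nat" where
  "B1 n = card {p \<in> Spt1_do n. odd (num_larger p)}"

definition spt1_do :: "nat \<Rightarrow> int" where
  "spt1_do n = int (B0 n) + int (B1 n)"

definition spt1'_do :: "nat \<Rightarrow> int" where
  "spt1'_do n = int (B0 n) - int (B1 n)"

definition distinct_parts :: "nat multiset \<Rightarrow> bool" where
  "distinct_parts p = (\<forall>x\<in>#p. count p x = 1)"

definition p_de :: "nat \<Rightarrow> int" where
  "p_de n = int (card {p \<in> partitions n. distinct_parts p \<and> (\<forall>x\<in>#p. even x)})"

definition p_do :: "nat \<Rightarrow> int" where
  "p_do n = int (card {p \<in> partitions n. distinct_parts p \<and> (\<forall>x\<in>#p. odd x)})"

definition p'_do :: "nat \<Rightarrow> int" where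
  "p'_do n = int (card {p \<in> partitions n. distinct_parts p \<and> (\<forall>x\<in>#p. odd x) \<and> even (size p)})
           - int (card {p \<in> partitions n. distinct_parts p \<and> (\<forall>x\<in>#p. odd x) \<and> odd (size p)})"

end

theory Submission
  imports Defs
begin

text \<open>Sort the partitions in Spt1_do(n) by their smallest part s. If s = 1, deleting it leaves a
  partition of n - 1 into distinct even parts. If s \<ge> 2, lowering s to s - 1 gives a partition
  of n - 1 into distinct parts that all have the parity of s - 1, and every nonempty such partition
  arises in exactly one way; s odd yields the even case, s even the odd case. Deleting the part 1
  keeps the number of parts larger than s, lowering s adds one part to it, so in the signed count
  the two copies of p_de cancel and p'_do changes sign.\<close>

lemma card_filter_split: "finite A \<Longrightarrow> card A = card {x\<in>A. P x} + card {x\<in>A. \<not> P x}"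
  using card_Int_Diff[of A "Collect P"] by (simp add: Collect_conj_eq Int_commute set_diff_eq)

lemma card_Collect_bij_betw:
  "bij_betw f A B \<Longrightarrow> card {x\<in>A. P (f x)} = card {y\<in>B. P y}"
  by (rule bij_betw_same_card, rule bij_betw_Collect[where Q = P]) auto

lemma size_le_sum_mset: "(\<forall>x\<in>#p. 0 < (x::nat)) \<Longrightarrow> size p \<le> sum_mset p"
  by (induction p) auto

lemma member_le_sum_mset: "x \<in># p \<Longrightarrow> x \<le> sum_mset (p :: nat multiset)"
  by (auto dest!: multi_member_split)

lemma finite_partitions: "finite (partitions m)"
proof (rule finite_subset)
  show "partitions m \<subseteq> (\<Union>k\<le>m. multisets_of_size {..m} k)"
    using size_le_sum_mset member_le_sum_mset
    by (fastforce simp: partitions_def multisets_of_size_def)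
qed auto

lemma partitions_add_mset:
  "add_mset s R \<in> partitions n \<longleftrightarrow> 0 < s \<and> (\<forall>x\<in>#R. 0 < x) \<and> s + sum_mset R = n"
  by (auto simp: partitions_def)

lemma distinct_parts_add_mset:
  "distinct_parts (add_mset s R) \<longleftrightarrow> s \<notin># R \<and> distinct_parts R"
proof -
  have "x \<noteq> s" if "x \<in># R" "s \<notin># R" for x
    using that by blast
  then show ?thesis
    unfolding distinct_parts_def by (auto simp: not_in_iff)
qed

lemma spart_add_mset: "\<forall>x\<in>#R. s \<le> x \<Longrightarrow> spart (add_mset s R) = s"
  unfolding spart_def by (intro Min_eqI) auto

lemma num_larger_add_mset: "\<forall>x\<in>#R. s < x \<Longrightarrow> num_larger (add_mset s R) = size R"
  unfolding num_larger_def
  by (simp add: spart_add_mset less_imp_le filter_mset_cong[of R R _ "\<lambda>_. True"])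

lemma spart_split:
  assumes "count p (spart p) = 1"
  obtains R where "p = add_mset (spart p) R" and "\<forall>x\<in>#R. spart p < x"
proof
  show "p = add_mset (spart p) (p - {#spart p#})"
    using assms by (simp add: insert_DiffM count_greater_zero_iff[symmetric])
  have "spart p \<notin># p - {#spart p#}"
    using assms by (simp add: not_in_iff)
  moreover have "spart p \<le> x" if "x \<in># p" for x
    using that unfolding spart_def by simp
  ultimately show "\<forall>x\<in># p - {#spart p#}. spart p < x"
    by (metis in_diffD order_le_imp_less_or_eq)
qed

lemma Suc_less_if_same_parity:
  fixes t x :: nat
  shows "t < x \<Longrightarrow> even x = even t \<Longrightarrow> Suc t < x"
  by (metis Suc_lessI even_Suc)

lemma Spt1_doE:
  assumes "\<pi> \<in> Spt1_do n"
  obtains s R where "\<pi> = add_mset s R" and "0 < s" and "s + sum_mset R = n"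
    and "distinct_parts R" and "\<forall>x\<in>#R. s < x \<and> odd x \<noteq> odd s"
proof -
  define s where "s = spart \<pi>"
  have "count \<pi> s = 1" and "\<pi> \<in> partitions n"
    using assms by (simp_all add: Spt1_do_def s_def)
  obtain R where \<pi>: "\<pi> = add_mset s R" and R: "\<forall>x\<in>#R. s < x"
    using spart_split \<open>count \<pi> s = 1\<close> unfolding s_def by blast
  have "\<forall>x\<in>#\<pi> - {#s#}. count (\<pi> - {#s#}) x = 1 \<and> odd x \<noteq> odd s"
    using assms unfolding Spt1_do_def s_def by blast
  then have "distinct_parts R" and "\<forall>x\<in>#R. odd x \<noteq> odd s"
    unfolding distinct_parts_def using \<pi> by simp_all
  moreover have "0 < s" and "s + sum_mset R = n"
    using \<open>\<pi> \<in> partitions n\<close> unfolding \<pi> partitions_add_mset by simp_all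
  ultimately show thesis
    using that \<pi> R by blast
qed

lemma add_mset_in_Spt1_do:
  assumes "0 < s" and "s + sum_mset R = n" and "distinct_parts R"
    and R: "\<forall>x\<in>#R. s < x \<and> odd x \<noteq> odd s"
  shows "add_mset s R \<in> Spt1_do n"
proof -
  have "spart (add_mset s R) = s"
    using R by (simp add: spart_add_mset less_imp_le)
  moreover have "count R s = 0"
    using R by (auto simp: count_eq_zero_iff)
  moreover have "add_mset s R \<in> partitions n"
    using assms less_trans unfolding partitions_add_mset by blast
  ultimately show ?thesis
    using R \<open>distinct_parts R\<close> unfolding Spt1_do_def distinct_parts_def by simp
qed

lemma num_larger_Spt1_do:
  "\<pi> \<in> Spt1_do n \<Longrightarrow> num_larger \<pi> = size (\<pi> - {#spart \<pi>#})"
  by (elim Spt1_doE) (simp add: num_larger_add_mset spart_add_mset less_imp_le)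

lemma finite_Spt1_do: "finite (Spt1_do n)"
  using finite_partitions by (simp add: Spt1_do_def)

definition distinct_partitions :: "(nat \<Rightarrow> bool) \<Rightarrow> nat \<Rightarrow> nat multiset set" where
  "distinct_partitions P m = {p \<in> partitions m. distinct_parts p \<and> (\<forall>x\<in>#p. P x)}"

lemma finite_distinct_partitions: "finite (distinct_partitions P m)"
  using finite_partitions by (simp add: distinct_partitions_def)

lemma p_de_eq: "p_de m = int (card (distinct_partitions even m))"
  by (simp add: p_de_def distinct_partitions_def)

lemma p_do_eq: "p_do m = int (card (distinct_partitions odd m))"
  by (simp add: p_do_def distinct_partitions_def)

lemma p'_do_eq:
  "p'_do m = int (card {E \<in> distinct_partitions odd m. even (size E)})
           - int (card {E \<in> distinct_partitions odd m. odd (size E)})"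
  by (simp add: p'_do_def distinct_partitions_def conj_assoc)

lemma distinct_partitionsE:
  assumes "E \<in> distinct_partitions P m" and "0 < m"
  obtains t R where "E = add_mset t R" and "0 < t" and "P t" and "t + sum_mset R = m"
    and "distinct_parts R" and "\<forall>x\<in>#R. t < x \<and> P x"
proof -
  define t where "t = spart E"
  have "E \<noteq> {#}"
    using assms by (auto simp: distinct_partitions_def partitions_def)
  then have "t \<in># E"
    unfolding t_def spart_def by simp
  then have "count E t = 1"
    using assms by (simp add: distinct_partitions_def distinct_parts_def)
  then obtain R where E: "E = add_mset t R" and R: "\<forall>x\<in>#R. t < x"
    using spart_split unfolding t_def by blast
  moreover have "0 < t" "P t" "t + sum_mset R = m" "distinct_parts R" "\<forall>x\<in>#R. P x"
    using assms(1) unfolding E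
    by (auto simp: distinct_partitions_def partitions_add_mset distinct_parts_add_mset)
  ultimately show thesis
    using that by blast
qed

lemma add_mset_in_distinct_partitions:
  assumes "0 < t" and "P t" and "t + sum_mset R = m" and "distinct_parts R"
    and R: "\<forall>x\<in>#R. t < x \<and> P x"
  shows "add_mset t R \<in> distinct_partitions P m"
proof -
  have "t \<notin># R"
    using R by blast
  moreover have "\<forall>x\<in>#R. 0 < x"
    using R \<open>0 < t\<close> less_trans by blast
  ultimately show ?thesis
    using assms unfolding distinct_partitions_def
    by (simp add: partitions_add_mset distinct_parts_add_mset)
qed

lemma bij_betw_remove_spart_one:
  assumes "1 \<le> n"
  shows "bij_betw (\<lambda>\<pi>. \<pi> - {#1#}) {\<pi> \<in> Spt1_do n. spart \<pi> = 1}
    (distinct_partitions even (n - 1))"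
proof (rule bij_betw_byWitness[where f' = "add_mset 1"])
  let ?A = "{\<pi> \<in> Spt1_do n. spart \<pi> = 1}"
  let ?B = "distinct_partitions even (n - 1)"
  have "\<pi> - {#1#} \<in> ?B \<and> add_mset 1 (\<pi> - {#1#}) = \<pi>" if "\<pi> \<in> Spt1_do n" and "spart \<pi> = 1" for \<pi>
    using that(1)
  proof (rule Spt1_doE)
    fix s R
    assume \<pi>: "\<pi> = add_mset s R" and "0 < s" "s + sum_mset R = n" "distinct_parts R"
      and R: "\<forall>x\<in>#R. s < x \<and> odd x \<noteq> odd s"
    moreover have "s = 1"
      using \<open>spart \<pi> = 1\<close> R unfolding \<pi> by (simp add: spart_add_mset less_imp_le)
    ultimately show ?thesis
      by (auto simp: distinct_partitions_def partitions_def)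
  qed
  then show "(\<lambda>\<pi>. \<pi> - {#1#}) ` ?A \<subseteq> ?B" and "\<forall>\<pi>\<in>?A. add_mset 1 (\<pi> - {#1#}) = \<pi>"
    by auto
  have "add_mset 1 E \<in> ?A" if E: "E \<in> ?B" for E
  proof -
    have "\<forall>x\<in>#E. 1 < x \<and> odd x \<noteq> odd (1::nat)"
      using E Suc_less_if_same_parity[of 0] by (auto simp: distinct_partitions_def partitions_def)
    moreover have "1 + sum_mset E = n" "distinct_parts E"
      using E assms by (auto simp: distinct_partitions_def partitions_def)
    ultimately show ?thesis
      by (simp add: add_mset_in_Spt1_do spart_add_mset less_imp_le)
  qed
  then show "add_mset 1 ` ?B \<subseteq> ?A"
    by auto
qed simp

lemma bij_betw_decrement_spart:
  assumes "2 \<le> n"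
  shows "bij_betw (\<lambda>\<pi>. add_mset (spart \<pi> - 1) (\<pi> - {#spart \<pi>#}))
    {\<pi> \<in> Spt1_do n. spart \<pi> \<noteq> 1 \<and> odd (spart \<pi>) = c}
    (distinct_partitions (\<lambda>x. even x = c) (n - 1))"
proof (rule bij_betw_byWitness[where f' = "\<lambda>E. add_mset (spart E + 1) (E - {#spart E#})"])
  let ?A = "{\<pi> \<in> Spt1_do n. spart \<pi> \<noteq> 1 \<and> odd (spart \<pi>) = c}"
  let ?B = "distinct_partitions (\<lambda>x. even x = c) (n - 1)"
  let ?f = "\<lambda>\<pi>. add_mset (spart \<pi> - 1) (\<pi> - {#spart \<pi>#})"
  let ?g = "\<lambda>E. add_mset (spart E + 1) (E - {#spart E#})"
  have "?f \<pi> \<in> ?B \<and> ?g (?f \<pi>) = \<pi>"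
    if "\<pi> \<in> Spt1_do n" and \<pi>: "spart \<pi> \<noteq> 1" "odd (spart \<pi>) = c" for \<pi>
    using that(1)
  proof (rule Spt1_doE)
    fix s R
    assume \<pi>_eq: "\<pi> = add_mset s R" and "0 < s" "s + sum_mset R = n" "distinct_parts R"
      and R: "\<forall>x\<in>#R. s < x \<and> odd x \<noteq> odd s"
    have "spart \<pi> = s"
      using R unfolding \<pi>_eq by (simp add: spart_add_mset less_imp_le)
    then have "2 \<le> s" "odd s = c"
      using \<pi> \<open>0 < s\<close> by auto
    have f: "?f \<pi> = add_mset (s - 1) R"
      using \<open>spart \<pi> = s\<close> unfolding \<pi>_eq by simp
    have R': "\<forall>x\<in>#R. s - 1 < x \<and> even x = c"
      using R \<open>odd s = c\<close> less_imp_diff_less by blast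
    with \<open>2 \<le> s\<close> \<open>odd s = c\<close> \<open>s + sum_mset R = n\<close> \<open>distinct_parts R\<close>
    have "add_mset (s - 1) R \<in> ?B"
      by (simp add: add_mset_in_distinct_partitions)
    moreover have "?g (add_mset (s - 1) R) = \<pi>"
      using \<open>2 \<le> s\<close> R' unfolding \<pi>_eq by (simp add: spart_add_mset less_imp_le)
    ultimately show ?thesis
      unfolding f ..
  qed
  then show "?f ` ?A \<subseteq> ?B" and "\<forall>\<pi>\<in>?A. ?g (?f \<pi>) = \<pi>"
    by auto
  have "?g E \<in> ?A \<and> ?f (?g E) = E" if "E \<in> ?B" for E
    using that
  proof (rule distinct_partitionsE)
    show "0 < n - 1"
      using assms by simp
    fix t R
    assume E: "E = add_mset t R" and "0 < t" "even t = c" "t + sum_mset R = n - 1"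
      "distinct_parts R" and R: "\<forall>x\<in>#R. t < x \<and> even x = c"
    then have R': "\<forall>x\<in>#R. Suc t < x \<and> odd x \<noteq> odd (Suc t)"
      using Suc_less_if_same_parity by auto
    have "spart E = t"
      using R unfolding E by (simp add: spart_add_mset less_imp_le)
    then have "?g E = add_mset (Suc t) R"
      unfolding E by simp
    moreover have "spart (add_mset (Suc t) R) = Suc t"
      using R' by (simp add: spart_add_mset less_imp_le)
    moreover have "add_mset (Suc t) R \<in> Spt1_do n"
      using R' \<open>t + sum_mset R = n - 1\<close> \<open>distinct_parts R\<close> assms
      by (intro add_mset_in_Spt1_do) auto
    ultimately show ?thesis
      using \<open>0 < t\<close> \<open>even t = c\<close> unfolding E by simp
  qed
  then show "?g ` ?B \<subseteq> ?A" and "\<forall>E\<in>?B. ?f (?g E) = E"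
    by auto
qed

lemma card_Spt1_do_num_larger_parity:
  assumes "2 \<le> n"
  shows "card {\<pi> \<in> Spt1_do n. even (num_larger \<pi>) = e} =
     card {E \<in> distinct_partitions even (n - 1). even (size E) = e}
   + card {E \<in> distinct_partitions even (n - 1). even (size E) \<noteq> e}
   + card {E \<in> distinct_partitions odd (n - 1). even (size E) \<noteq> e}"
proof -
  let ?S = "\<lambda>P. {\<pi> \<in> Spt1_do n. P \<pi> \<and> even (num_larger \<pi>) = e}"
  let ?one = "?S (\<lambda>\<pi>. spart \<pi> = 1)"
  let ?larger = "\<lambda>c. ?S (\<lambda>\<pi>. spart \<pi> \<noteq> 1 \<and> odd (spart \<pi>) = c)"
  have "card ?one =
      card {\<pi> \<in> {\<pi> \<in> Spt1_do n. spart \<pi> = 1}. even (size (\<pi> - {#1#})) = e}"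
    by (rule arg_cong[where f = card]) (auto simp: num_larger_Spt1_do)
  also have "\<dots> = card {E \<in> distinct_partitions even (n - 1). even (size E) = e}"
    using assms by (intro card_Collect_bij_betw bij_betw_remove_spart_one) simp
  finally have card_one:
    "card ?one = card {E \<in> distinct_partitions even (n - 1). even (size E) = e}" .
  have card_larger: "card (?larger c) =
      card {E \<in> distinct_partitions (\<lambda>x. even x = c) (n - 1). even (size E) \<noteq> e}" for c
  proof -
    have "card (?larger c) =
        card {\<pi> \<in> {\<pi> \<in> Spt1_do n. spart \<pi> \<noteq> 1 \<and> odd (spart \<pi>) = c}.
          even (size (add_mset (spart \<pi> - 1) (\<pi> - {#spart \<pi>#}))) \<noteq> e}"
      by (rule arg_cong[where f = card]) (auto simp: num_larger_Spt1_do)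
    also have "\<dots> =
        card {E \<in> distinct_partitions (\<lambda>x. even x = c) (n - 1). even (size E) \<noteq> e}"
      using assms by (intro card_Collect_bij_betw bij_betw_decrement_spart)
    finally show ?thesis .
  qed
  have "card {\<pi> \<in> Spt1_do n. even (num_larger \<pi>) = e} =
      card (?one \<union> ?larger True \<union> ?larger False)"
    by (rule arg_cong[where f = card]) auto
  also have "\<dots> = card (?one \<union> ?larger True) + card (?larger False)"
    by (intro card_Un_disjoint) (auto simp: finite_Spt1_do)
  also have "card (?one \<union> ?larger True) = card ?one + card (?larger True)"
    by (intro card_Un_disjoint) (auto simp: finite_Spt1_do)
  finally show ?thesis
    using card_one card_larger[of True] card_larger[of False] by simp
qed

theorem theorem3p1:
  fixes n :: nat
  assumes "n \<ge> 2"
  shows "spt1_do n = 2 * p_de (n - 1) + p_do (n - 1) \<and> spt1'_do n = - p'_do (n - 1)"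
proof -
  have "card (distinct_partitions P (n - 1)) =
      card {E \<in> distinct_partitions P (n - 1). even (size E)} +
      card {E \<in> distinct_partitions P (n - 1). odd (size E)}" for P
    using card_filter_split[OF finite_distinct_partitions] by simp
  then show ?thesis
    unfolding spt1_do_def spt1'_do_def B0_def B1_def p_de_eq p_do_eq p'_do_eq
    using card_Spt1_do_num_larger_parity[OF assms, of True]
      card_Spt1_do_num_larger_parity[OF assms, of False] by simp
qed

end
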